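(* Let $m$ be an odd integer, $n\ge 0$ an integer, and let $x$ be one of the $n+1$ consecutive odd integers $m,m+2,\ldots,m+2n$. Then these $n+1$ integers can be arranged in a sequence $y_1,y_2,\ldots,y_{n+1}$ (each used exactly once) with $y_{n+1}=x$ such that for every $k=2,\ldots,n+1$, $|y_k-y_{k-1}|=2^{s_k}$ for some integer $s_k\ge 1$. *)

theory Defs
  imports Main
begin

end

theory Submission
  imports Defs
begin

text \<open>Dividing by 2 after subtracting m, it suffices to run through the integer interval
  {0..n} with steps of length 1 or 2, ending at a prescribed point j.  Walk up from 0 to
  j - 1 in unit steps, jump to j + 1, and cover {j..n} by a zigzag that ends at j: from
  j + 1 go upwards in steps of 2 through one parity class, then come back down through the
  other one.\<close>

definition short_step :: "int \<Rightarrow> int \<Rightarrow> bool" where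
  "short_step u v \<longleftrightarrow> \<bar>u - v\<bar> \<in> {1, 2}"

lemma short_step_commute: "short_step u v \<longleftrightarrow> short_step v u"
  by (auto simp: short_step_def)

lemma successively_short_step_upto: "successively short_step [a..b]"
proof (induction "nat (b - a + 1)" arbitrary: a)
  case (Suc k)
  show ?case
  proof (cases "a < b")
    case True
    have "successively short_step [a + 1..b]"
      using Suc.hyps by (intro Suc.hyps(1)) simp
    moreover have "hd [a + 1..b] = a + 1"
      using True by (simp add: upto_rec1)
    ultimately show ?thesis
      using True by (simp add: upto_rec1[of a b] successively_Cons short_step_def)
  qed (cases "a = b"; simp)
qed simp

text \<open>For k > 0 this is a, a + 2, a + 4, ..., a + 3, a + 1.\<close>

fun zigzag :: "int \<Rightarrow> nat \<Rightarrow> int list" where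
  "zigzag a 0 = [a]"
| "zigzag a (Suc k) = a # rev (zigzag (a + 1) k)"

lemma zigzag_not_Nil [simp]: "zigzag a k \<noteq> []"
  by (cases k) simp_all

lemma hd_zigzag [simp]: "hd (zigzag a k) = a"
  by (cases k) simp_all

lemma last_zigzag: "last (zigzag a k) = (if k = 0 then a else a + 1)"
  by (cases k) (simp_all add: last_rev)

lemma set_zigzag [simp]: "set (zigzag a k) = {a..a + int k}"
  by (induction k arbitrary: a) auto

lemma distinct_zigzag: "distinct (zigzag a k)"
  by (induction k arbitrary: a) auto

lemma successively_short_step_zigzag: "successively short_step (zigzag a k)"
proof (induction k arbitrary: a)
  case (Suc k)
  have "short_step a (last (zigzag (a + 1) k))"
    by (simp add: last_zigzag short_step_def)
  with Suc.IH show ?case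
    by (simp add: successively_Cons hd_rev short_step_commute)
qed simp

lemma short_step_path_ending_at:
  fixes a b j :: int
  assumes "a \<le> j" "j \<le> b"
  obtains xs where "distinct xs" "set xs = {a..b}" "last xs = j" "successively short_step xs"
proof
  let ?tail = "zigzag j (nat (b - j))"
  let ?xs = "[a..j - 1] @ rev ?tail"
  show "distinct ?xs"
    by (simp add: distinct_zigzag)
  show "set ?xs = {a..b}"
    using assms by auto
  show "last ?xs = j"
    by (simp add: last_rev)
  have "[a..j - 1] = [] \<or> short_step (last [a..j - 1]) (hd (rev ?tail))"
    by (cases "a < j") (simp_all add: upto_rec2 hd_rev last_zigzag short_step_def)
  then show "successively short_step ?xs"
    by (auto simp: successively_append_iff successively_short_step_upto
        successively_short_step_zigzag short_step_commute)
qed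

theorem lemma4p5:
  fixes m x :: int and n :: nat
  assumes "odd m"
    and "x \<in> {m + 2 * int i | i. i \<le> n}"
  shows "\<exists>ys :: int list. length ys = n + 1 \<and> distinct ys
           \<and> set ys = {m + 2 * int i | i. i \<le> n}
           \<and> last ys = x
           \<and> (\<forall>k. 0 < k \<and> k < n + 1 \<longrightarrow>
                  (\<exists>s::nat. s \<ge> 1 \<and> \<bar>ys ! k - ys ! (k - 1)\<bar> = 2 ^ s))"
proof -
  obtain i where i: "x = m + 2 * int i" "i \<le> n"
    using assms(2) by auto
  obtain xs where xs: "distinct xs" "set xs = {0..int n}" "last xs = int i"
    "successively short_step xs"
    using short_step_path_ending_at[of 0 "int i" "int n"] i(2) by auto
  define ys where "ys = map (\<lambda>u. m + 2 * u) xs"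
  have "xs \<noteq> []"
    using xs(2) by auto
  have length_xs: "length xs = n + 1"
    using distinct_card[OF xs(1)] xs(2) by simp
  have "set ys = {m + 2 * int i | i. i \<le> n}"
    using xs(2) by (force simp: ys_def image_iff intro: exI[of _ "nat _"])
  moreover have "last ys = x"
    using \<open>xs \<noteq> []\<close> xs(3) i(1) by (simp add: ys_def last_map)
  moreover have "\<exists>s::nat. s \<ge> 1 \<and> \<bar>ys ! k - ys ! (k - 1)\<bar> = 2 ^ s"
    if k: "0 < k" "k < n + 1" for k
  proof -
    have "short_step (xs ! (k - 1)) (xs ! k)"
      using successively_nth[OF xs(4), of "k - 1"] k length_xs by simp
    moreover have "ys ! k - ys ! (k - 1) = 2 * (xs ! k - xs ! (k - 1))"
      using k length_xs by (simp add: ys_def)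
    ultimately have "\<bar>ys ! k - ys ! (k - 1)\<bar> \<in> {2 ^ 1, 2 ^ 2}"
      by (auto simp: short_step_def abs_minus_commute)
    then show ?thesis
      by (metis insert_iff empty_iff one_le_numeral order_refl)
  qed
  ultimately show ?thesis
    using length_xs xs(1) by (intro exI[of _ ys]) (auto simp: ys_def distinct_map inj_on_def)
qed

end
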